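(* Let $n\ge1$. The Chabauty space $\mathcal{C}(\mathbf{Z}\times\mathbf{Z}/n\mathbf{Z})$ is homeomorphic to $\overline{\mathbf{N}}\times[d(n)]$, the accumulation points corresponding to the subgroups $\{0\}\times\langle m\rangle$, with $m$ a positive divisor of $n$.
   Context: For a discrete group $G$, $\mathcal{C}(G)$ is the set of subgroups of $G$ with the Chabauty topology (the topology induced by the product topology on $\{0,1\}^G$). $\overline{\mathbf{N}}=\mathbf{N}\cup\{\infty\}$ is the one-point compactification of $\mathbf{N}$, $[k]=\{1,\dots,k\}$ (discrete), $d(n)$ is the number of positive divisors of $n$, and $\langle m\rangle$ is the subgroup of $\mathbf{Z}/n\mathbf{Z}$ generated by the class of $m$. *)

theory Defs
  imports "HOL-Analysis.Analysis" "HOL-Algebra.Algebra" "HOL-Library.Extended_Real"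
begin

definition chabauty_topology :: "('a, 'b) monoid_scheme \<Rightarrow> 'a set topology" where
  "chabauty_topology G =
     pullback_topology {H. subgroup H G} (\<lambda>H. \<lambda>g\<in>carrier G. g \<in> H)
       (product_topology (\<lambda>_. discrete_topology (UNIV :: bool set)) (carrier G))"

definition Z_times_Zn :: "nat \<Rightarrow> (int \<times> int) monoid" where
  "Z_times_Zn n = integer_group \<times>\<times> integer_mod_group n"

definition num_divisors :: "nat \<Rightarrow> nat" where
  "num_divisors n = card {m. m dvd n}"

end

theory Submission
  imports Defs
begin

(* Every subgroup H of Z x Z/n is the reduction of a subgroup L of Z^2 containing (0, n), and every
   subgroup of Z^2 is generated by (d, a) and (0, m) with d, m >= 0 and 0 <= a < m (Hermite normal
   form); here m divides n.  So the subgroups of Z x Z/n are indexed by a divisor m of n together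
   with either d = 0 (then H = {0} x <m>), or d > 0 and a residue a mod m, which are enumerated by
   k = (d - 1) m + a.  Whether (x, y) lies in H does not depend on (d, a) once d > |x|, so as k tends
   to infinity these subgroups converge to {0} x <m>.  This defines a continuous bijection from the
   compact space N-bar x [d(n)] onto the Hausdorff Chabauty space, hence a homeomorphism, and the
   accumulation points are the images of the points (infinity, m). *)

section \<open>Subgroups of Z and of Z x Z\<close>

lemma int_pow_integer_group_DirProd:
  "(x, y) [^]\<^bsub>integer_group \<times>\<times> integer_group\<^esub> (k::int) = (k * x, k * y)"
proof -
  have nat_pow: "(x, y) [^]\<^bsub>integer_group \<times>\<times> integer_group\<^esub> (j::nat) = (int j * x, int j * y)" for j
    by (induction j) (auto simp: algebra_simps)
  show ?thesis
    by (simp add: int_pow_def2 nat_pow)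
qed

lemma pair_subgroup_add:
  "subgroup L (integer_group \<times>\<times> integer_group) \<Longrightarrow> (x, y) \<in> L \<Longrightarrow> (x', y') \<in> L \<Longrightarrow> (x + x', y + y') \<in> L"
  using subgroup.m_closed by fastforce

lemma pair_subgroup_smult:
  "subgroup L (integer_group \<times>\<times> integer_group) \<Longrightarrow> (x, y) \<in> L \<Longrightarrow> (k * x, k * y) \<in> L"
  using group.subgroup_int_pow_closed[OF DirProd_group, of integer_group integer_group L "(x, y)" k]
  by (simp add: int_pow_integer_group_DirProd)

lemma pair_subgroup_neg:
  "subgroup L (integer_group \<times>\<times> integer_group) \<Longrightarrow> (x, y) \<in> L \<Longrightarrow> (- x, - y) \<in> L"
  using subgroup.m_inv_closed by fastforce

lemma subgroup_integer_group_eq_dvd: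
  assumes S: "subgroup S integer_group"
  obtains g where "g \<ge> 0" "S = {x. g dvd x}"
proof (cases "S = {0}")
  case True
  then show ?thesis by (intro that[of 0]) auto
next
  case False
  have mult_closed: "k * x \<in> S" if "x \<in> S" for x k
    using group.subgroup_int_pow_closed[OF group_integer_group S that, of k] by simp
  obtain x where x: "x \<in> S" "x \<noteq> 0"
    using False subgroup.one_closed[OF S] by auto
  have "\<bar>x\<bar> \<in> S"
    using mult_closed[OF x(1), of "sgn x"] by (simp add: abs_sgn mult.commute)
  then have "nat \<bar>x\<bar> > 0 \<and> int (nat \<bar>x\<bar>) \<in> S"
    using x(2) by simp
  then have "\<exists>j. j > 0 \<and> int j \<in> S" ..
  define g where "g = (LEAST j. j > 0 \<and> int j \<in> S)"
  have g: "g > 0" "int g \<in> S"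
    using LeastI_ex[OF \<open>\<exists>j. j > 0 \<and> int j \<in> S\<close>] by (simp_all add: g_def)
  have g_least: "g \<le> i" if "i > 0" "int i \<in> S" for i
    using that by (simp add: g_def Least_le)
  have "S = {x. int g dvd x}"
  proof safe
    fix y assume y: "y \<in> S"
    have "y mod int g = y + (- (y div int g)) * int g"
      by (simp add: minus_div_mult_eq_mod[symmetric])
    also have "\<dots> \<in> S"
      using subgroup.m_closed[OF S y mult_closed[OF g(2), of "- (y div int g)"]] by simp
    finally have "y mod int g \<in> S" .
    moreover have "0 \<le> y mod int g" "y mod int g < int g"
      using g(1) by simp_all
    ultimately have "y mod int g = 0"
      using g_least[of "nat (y mod int g)"] by (cases "y mod int g = 0") auto
    then show "int g dvd y" by presburger
  next
    fix y assume "int g dvd y"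
    then show "y \<in> S" using mult_closed[OF g(2)] by (auto simp: mult.commute)
  qed
  then show ?thesis by (intro that[of "int g"]) auto
qed

definition int_lattice :: "int \<Rightarrow> int \<Rightarrow> int \<Rightarrow> (int \<times> int) set" where
  "int_lattice m d a = {(d * k, k * a + m * l) | k l. True}"

lemma mem_int_lattice_iff: "p \<in> int_lattice m d a \<longleftrightarrow> (\<exists>k l. p = (d * k, k * a + m * l))"
  by (simp add: int_lattice_def)

lemma subgroup_int_lattice: "subgroup (int_lattice m d a) (integer_group \<times>\<times> integer_group)"
proof (rule group.subgroupI)
  show "int_lattice m d a \<noteq> {}"
    by (auto simp: int_lattice_def)
  show "inv\<^bsub>integer_group \<times>\<times> integer_group\<^esub> p \<in> int_lattice m d a" if p: "p \<in> int_lattice m d a" for p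
  proof -
    obtain k l where "p = (d * k, k * a + m * l)"
      using p by (auto simp: mem_int_lattice_iff)
    then have "inv\<^bsub>integer_group \<times>\<times> integer_group\<^esub> p = (d * (-k), (-k) * a + m * (-l))"
      by simp
    then show ?thesis
      unfolding mem_int_lattice_iff by blast
  qed
  show "p \<otimes>\<^bsub>integer_group \<times>\<times> integer_group\<^esub> q \<in> int_lattice m d a"
    if pq: "p \<in> int_lattice m d a" "q \<in> int_lattice m d a" for p q
  proof -
    obtain k l k' l' where "p = (d * k, k * a + m * l)" "q = (d * k', k' * a + m * l')"
      using pq by (auto simp: mem_int_lattice_iff)
    then have "p \<otimes>\<^bsub>integer_group \<times>\<times> integer_group\<^esub> q = (d * (k + k'), (k + k') * a + m * (l + l'))"
      by (simp add: algebra_simps)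
    then show ?thesis
      unfolding mem_int_lattice_iff by blast
  qed
qed (auto intro: DirProd_group)

lemma int_lattice_mod: "int_lattice m d (a mod m) = int_lattice m d a"
proof (intro equalityI subsetI)
  fix p assume "p \<in> int_lattice m d (a mod m)"
  then obtain k l where "p = (d * k, k * (a mod m) + m * l)"
    by (auto simp: mem_int_lattice_iff)
  moreover have "k * (a mod m) + m * l = k * a + m * (l - k * (a div m))"
    by (simp add: algebra_simps minus_div_mult_eq_mod[symmetric])
  ultimately show "p \<in> int_lattice m d a"
    unfolding mem_int_lattice_iff by blast
next
  fix p assume "p \<in> int_lattice m d a"
  then obtain k l where "p = (d * k, k * a + m * l)"
    by (auto simp: mem_int_lattice_iff)
  moreover have "k * a + m * l = k * (a mod m) + m * (l + k * (a div m))"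
    by (simp add: algebra_simps minus_div_mult_eq_mod[symmetric])
  ultimately show "p \<in> int_lattice m d (a mod m)"
    unfolding mem_int_lattice_iff by blast
qed

lemma subgroup_column_pair_subgroup:
  assumes L: "subgroup L (integer_group \<times>\<times> integer_group)"
  shows "subgroup {y. (0, y) \<in> L} integer_group"
proof (rule group.subgroupI)
  fix y y' assume "y \<in> {y. (0, y) \<in> L}" "y' \<in> {y. (0, y) \<in> L}"
  then have "(- 0, - y) \<in> L" "(0 + 0, y + y') \<in> L"
    by (blast intro: pair_subgroup_neg[OF L] pair_subgroup_add[OF L])+
  then show "inv\<^bsub>integer_group\<^esub> y \<in> {y. (0, y) \<in> L}"
    and "y \<otimes>\<^bsub>integer_group\<^esub> y' \<in> {y. (0, y) \<in> L}"
    by simp_all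
qed (use subgroup.one_closed[OF L] in auto)

lemma subgroup_fst_image_pair_subgroup:
  assumes L: "subgroup L (integer_group \<times>\<times> integer_group)"
  shows "subgroup (fst ` L) integer_group"
proof (rule group.subgroupI)
  fix x x' assume "x \<in> fst ` L" and "x' \<in> fst ` L"
  then obtain y y' where "(x, y) \<in> L" "(x', y') \<in> L"
    by force
  then have "(- x, - y) \<in> L" "(x + x', y + y') \<in> L"
    using pair_subgroup_neg[OF L] pair_subgroup_add[OF L] by blast+
  then show "inv\<^bsub>integer_group\<^esub> x \<in> fst ` L" "x \<otimes>\<^bsub>integer_group\<^esub> x' \<in> fst ` L"
    by (simp_all add: rev_image_eqI)
qed (use subgroup.one_closed[OF L] in force)+

lemma subgroup_integer_group_DirProd_eq_int_lattice:
  assumes L: "subgroup L (integer_group \<times>\<times> integer_group)"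
  obtains m d a where "m \<ge> 0" "d \<ge> 0" "d = 0 \<Longrightarrow> a = 0" "m > 0 \<Longrightarrow> 0 \<le> a \<and> a < m"
    "L = int_lattice m d a"
proof -
  note add = pair_subgroup_add[OF L] and mult = pair_subgroup_smult[OF L]
  obtain m where m: "m \<ge> 0" and column: "\<And>y. (0, y) \<in> L \<longleftrightarrow> m dvd y"
    by (rule subgroup_integer_group_eq_dvd[OF subgroup_column_pair_subgroup[OF L]]) blast
  obtain d where d: "d \<ge> 0" and projection: "\<And>x. x \<in> fst ` L \<longleftrightarrow> d dvd x"
    by (rule subgroup_integer_group_eq_dvd[OF subgroup_fst_image_pair_subgroup[OF L]]) blast
  have "d \<in> fst ` L"
    using projection by simp
  then obtain a where a: "(d, a) \<in> L"
    by auto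
  have "L = int_lattice m d a"
  proof (intro equalityI subsetI)
    fix p assume p: "p \<in> L"
    obtain x y where xy: "p = (x, y)" by force
    have "x \<in> fst ` L"
      using rev_image_eqI[OF p, of x fst] xy by simp
    then obtain k where k: "x = d * k"
      using projection by (auto elim: dvdE)
    have "(x + (- k) * d, y + (- k) * a) \<in> L"
      using add[OF p[unfolded xy] mult[OF a, of "- k"]] .
    then have "m dvd y - k * a"
      using k column by (simp add: algebra_simps)
    then obtain l where "y = k * a + m * l"
      by (metis dvd_def diff_add_cancel add.commute)
    then show "p \<in> int_lattice m d a"
      using xy k by (auto simp: mem_int_lattice_iff)
  next
    fix p assume "p \<in> int_lattice m d a"
    then obtain k l where p: "p = (d * k, k * a + m * l)"
      by (auto simp: mem_int_lattice_iff)
    have "(0, m) \<in> L"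
      using column by simp
    from add[OF mult[OF a, of k] mult[OF this, of l]] show "p \<in> L"
      by (simp add: p mult.commute)
  qed
  moreover have "a mod m = 0" if "d = 0"
    using a column that by simp
  moreover have "0 \<le> a mod m \<and> a mod m < m" if "m > 0"
    using that by simp
  ultimately show ?thesis
    using that[of m d "a mod m"] m d by (simp add: int_lattice_mod)
qed

lemma mem_int_lattice_0_iff: "(x, y) \<in> int_lattice m 0 0 \<longleftrightarrow> x = 0 \<and> m dvd y"
  by (auto simp: mem_int_lattice_iff dvd_def)

lemma int_lattice_column:
  assumes "d = 0 \<Longrightarrow> a = 0"
  shows "(0, y) \<in> int_lattice m d a \<longleftrightarrow> m dvd y"
proof
  assume "(0, y) \<in> int_lattice m d a"
  then obtain k l where "d * k = 0" "y = k * a + m * l"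
    by (auto simp: mem_int_lattice_iff)
  with assms show "m dvd y"
    by auto
next
  assume "m dvd y"
  then obtain l where "y = m * l" ..
  then have "(0, y) = (d * 0, 0 * a + m * l)"
    by simp
  then show "(0, y) \<in> int_lattice m d a"
    unfolding mem_int_lattice_iff by blast
qed

lemma fst_image_int_lattice: "fst ` int_lattice m d a = {x. d dvd x}"
proof (intro equalityI subsetI)
  fix x assume "x \<in> {x. d dvd x}"
  then obtain k where "x = d * k"
    by (auto elim: dvdE)
  then have "(x, k * a + m * 0) \<in> int_lattice m d a"
    unfolding mem_int_lattice_iff by blast
  then show "x \<in> fst ` int_lattice m d a"
    by (simp add: rev_image_eqI)
qed (auto simp: mem_int_lattice_iff)

lemma int_lattice_inject:
  assumes "m \<ge> 0" "m' \<ge> 0" "d \<ge> 0" "d' \<ge> 0" "d = 0 \<Longrightarrow> a = 0" "d' = 0 \<Longrightarrow> a' = 0"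
    and eq: "int_lattice m d a = int_lattice m' d' a'"
  shows "m = m' \<and> d = d' \<and> a mod m = a' mod m"
proof -
  have column: "m dvd y \<longleftrightarrow> m' dvd y" for y
    using int_lattice_column[of d a y m] int_lattice_column[of d' a' y m'] eq assms(5,6) by simp
  have m: "m = m'"
    using column[of m] column[of m'] zdvd_antisym_nonneg[OF assms(1,2)] by simp
  have projection: "d dvd x \<longleftrightarrow> d' dvd x" for x
  proof -
    have "x \<in> fst ` int_lattice m d a \<longleftrightarrow> x \<in> fst ` int_lattice m' d' a'"
      by (simp only: eq)
    then show ?thesis
      by (simp add: fst_image_int_lattice)
  qed
  have d: "d = d'"
    using projection[of d] projection[of d'] zdvd_antisym_nonneg[OF assms(3,4)] by simp
  have "a mod m = a' mod m"
  proof (cases "d = 0")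
    case True
    then show ?thesis using assms(5,6) d by simp
  next
    case False
    have "(d * 1, 1 * a + m * 0) \<in> int_lattice m d a"
      unfolding mem_int_lattice_iff by blast
    then have "(d, a) \<in> int_lattice m d a'"
      using eq m d by simp
    then obtain k l where "d = d * k" "a = k * a' + m * l"
      by (auto simp: mem_int_lattice_iff)
    with False show ?thesis
      by simp
  qed
  with m d show ?thesis by blast
qed

lemma mem_int_lattice_near_axis:
  assumes "\<bar>x\<bar> < d"
  shows "(x, y) \<in> int_lattice m d a \<longleftrightarrow> (x, y) \<in> int_lattice m 0 0"
proof
  assume "(x, y) \<in> int_lattice m d a"
  then obtain k l where "x = d * k" "y = k * a + m * l"
    by (auto simp: mem_int_lattice_iff)
  moreover have "k = 0"
  proof (rule ccontr)
    assume "k \<noteq> 0"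
    then have "\<bar>d\<bar> * 1 \<le> \<bar>d\<bar> * \<bar>k\<bar>"
      by (intro mult_left_mono) auto
    with assms \<open>x = d * k\<close> show False
      by (simp add: abs_mult)
  qed
  ultimately show "(x, y) \<in> int_lattice m 0 0"
    by (simp add: mem_int_lattice_0_iff)
next
  assume "(x, y) \<in> int_lattice m 0 0"
  then obtain l where "x = 0" "y = m * l"
    by (auto simp: mem_int_lattice_0_iff elim: dvdE)
  then have "(x, y) = (d * 0, 0 * a + m * l)"
    by simp
  then show "(x, y) \<in> int_lattice m d a"
    unfolding mem_int_lattice_iff by blast
qed

lemma pair_subgroup_mod_iff:
  assumes L: "subgroup L (integer_group \<times>\<times> integer_group)" and N: "(0, N) \<in> L"
  shows "(x, y mod N) \<in> L \<longleftrightarrow> (x, y) \<in> L"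
proof
  assume "(x, y mod N) \<in> L"
  from pair_subgroup_add[OF L this pair_subgroup_smult[OF L N, of "y div N"]]
  show "(x, y) \<in> L"
    by simp
next
  assume "(x, y) \<in> L"
  from pair_subgroup_add[OF L this pair_subgroup_smult[OF L N, of "- (y div N)"]]
  show "(x, y mod N) \<in> L"
    by (simp add: minus_div_mult_eq_mod[symmetric])
qed

lemma pair_subgroup_strip_inject:
  assumes "subgroup L (integer_group \<times>\<times> integer_group)" "(0, N) \<in> L"
    and "subgroup L' (integer_group \<times>\<times> integer_group)" "(0, N) \<in> L'"
    and "N > 0" and eq: "L \<inter> UNIV \<times> {0..<N} = L' \<inter> UNIV \<times> {0..<N}"
  shows "L = L'"
proof -
  have "(x, y) \<in> L \<longleftrightarrow> (x, y) \<in> L'" for x y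
  proof -
    have "(x, y mod N) \<in> L \<inter> UNIV \<times> {0..<N} \<longleftrightarrow> (x, y mod N) \<in> L' \<inter> UNIV \<times> {0..<N}"
      by (simp only: eq)
    then have "(x, y mod N) \<in> L \<longleftrightarrow> (x, y mod N) \<in> L'"
      using \<open>N > 0\<close> by simp
    then show ?thesis
      using pair_subgroup_mod_iff assms(1-4) by blast
  qed
  then show ?thesis
    by (simp add: set_eq_iff split_paired_All)
qed

section \<open>Subgroups of Z x Z/nZ\<close>

lemma group_Z_times_Zn: "group (Z_times_Zn n)"
  unfolding Z_times_Zn_def by (intro DirProd_group) auto

lemma carrier_Z_times_Zn: "n \<ge> 1 \<Longrightarrow> carrier (Z_times_Zn n) = UNIV \<times> {0..<int n}"
  by (simp add: Z_times_Zn_def carrier_integer_mod_group)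

lemma mult_Z_times_Zn: "(x, y) \<otimes>\<^bsub>Z_times_Zn n\<^esub> (x', y') = (x + x', (y + y') mod int n)"
  by (simp add: Z_times_Zn_def)

lemma one_Z_times_Zn: "\<one>\<^bsub>Z_times_Zn n\<^esub> = (0, 0)"
  by (simp add: Z_times_Zn_def)

lemma inv_Z_times_Zn:
  "n \<ge> 1 \<Longrightarrow> y \<in> {0..<int n} \<Longrightarrow> inv\<^bsub>Z_times_Zn n\<^esub> (x, y) = (- x, (- y) mod int n)"
  unfolding Z_times_Zn_def by (subst inv_DirProd) (auto simp: carrier_integer_mod_group)

(* Z/nZ is represented by {0..<n}, so reducing L modulo n gives L \<inter> UNIV \<times> {0..<n}. *)
lemma subgroup_Z_times_Zn_strip:
  assumes n: "n \<ge> 1" and L: "subgroup L (integer_group \<times>\<times> integer_group)" and N: "(0, int n) \<in> L"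
  shows "subgroup (L \<inter> UNIV \<times> {0..<int n}) (Z_times_Zn n)"
proof (rule group.subgroupI[OF group_Z_times_Zn])
  show "L \<inter> UNIV \<times> {0..<int n} \<subseteq> carrier (Z_times_Zn n)"
    using n by (auto simp: carrier_Z_times_Zn)
  have "(0, 0) \<in> L"
    using subgroup.one_closed[OF L] by simp
  then show "L \<inter> UNIV \<times> {0..<int n} \<noteq> {}"
    using n by force
  show "inv\<^bsub>Z_times_Zn n\<^esub> p \<in> L \<inter> UNIV \<times> {0..<int n}" if p: "p \<in> L \<inter> UNIV \<times> {0..<int n}" for p
  proof -
    obtain x y where xy: "p = (x, y)" by force
    have "(- x, - y) \<in> L"
      using pair_subgroup_neg[OF L] p xy by blast
    then have "(- x, (- y) mod int n) \<in> L"
      using pair_subgroup_mod_iff[OF L N] by simp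
    then show ?thesis
      using n p xy by (simp add: inv_Z_times_Zn)
  qed
  show "p \<otimes>\<^bsub>Z_times_Zn n\<^esub> q \<in> L \<inter> UNIV \<times> {0..<int n}"
    if pq: "p \<in> L \<inter> UNIV \<times> {0..<int n}" "q \<in> L \<inter> UNIV \<times> {0..<int n}" for p q
  proof -
    obtain x y x' y' where xy: "p = (x, y)" "q = (x', y')" by force
    have "(x + x', y + y') \<in> L"
      using pair_subgroup_add[OF L] pq xy by blast
    then have "(x + x', (y + y') mod int n) \<in> L"
      using pair_subgroup_mod_iff[OF L N] by simp
    then show ?thesis
      using n xy by (simp add: mult_Z_times_Zn)
  qed
qed

lemma subgroup_Z_times_Zn_lift:
  assumes n: "n \<ge> 1" and H: "subgroup H (Z_times_Zn n)"
  obtains L where "subgroup L (integer_group \<times>\<times> integer_group)" "(0, int n) \<in> L"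
    "H = L \<inter> UNIV \<times> {0..<int n}"
proof
  let ?L = "{(x, y). (x, y mod int n) \<in> H}"
  have zero: "(0, 0) \<in> H"
    using subgroup.one_closed[OF H] by (simp add: one_Z_times_Zn)
  show "subgroup ?L (integer_group \<times>\<times> integer_group)"
  proof (rule group.subgroupI[OF DirProd_group[OF group_integer_group group_integer_group]])
    have "(0, 0) \<in> ?L"
      using zero by simp
    then show "?L \<noteq> {}"
      by blast
    show "inv\<^bsub>integer_group \<times>\<times> integer_group\<^esub> p \<in> ?L" if p: "p \<in> ?L" for p
    proof -
      obtain x y where xy: "p = (x, y)" by force
      have "inv\<^bsub>Z_times_Zn n\<^esub> (x, y mod int n) \<in> H"
        using subgroup.m_inv_closed[OF H] p xy by simp
      then show ?thesis
        using n xy by (simp add: inv_Z_times_Zn mod_minus_eq)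
    qed
    show "p \<otimes>\<^bsub>integer_group \<times>\<times> integer_group\<^esub> q \<in> ?L" if pq: "p \<in> ?L" "q \<in> ?L" for p q
    proof -
      obtain x y x' y' where xy: "p = (x, y)" "q = (x', y')" by force
      have "(x, y mod int n) \<otimes>\<^bsub>Z_times_Zn n\<^esub> (x', y' mod int n) \<in> H"
        using subgroup.m_closed[OF H] pq xy by simp
      then show ?thesis
        using xy by (simp add: mult_Z_times_Zn mod_add_eq)
    qed
  qed simp
  show "(0, int n) \<in> ?L"
    using zero by simp
  have "H \<subseteq> UNIV \<times> {0..<int n}"
    using subgroup.subset[OF H] n by (simp add: carrier_Z_times_Zn)
  then show "H = ?L \<inter> UNIV \<times> {0..<int n}"
    by auto
qed

lemma subgroup_Z_times_Zn_cases:
  assumes n: "n \<ge> 1" and H: "subgroup H (Z_times_Zn n)"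
  obtains m d a where "m > 0" "m dvd int n" "d \<ge> 0" "d = 0 \<Longrightarrow> a = 0" "0 \<le> a" "a < m"
    "H = int_lattice m d a \<inter> UNIV \<times> {0..<int n}"
proof -
  obtain L where L: "subgroup L (integer_group \<times>\<times> integer_group)" "(0, int n) \<in> L"
    and H_eq: "H = L \<inter> UNIV \<times> {0..<int n}"
    using subgroup_Z_times_Zn_lift[OF n H] by blast
  obtain m d a where m: "m \<ge> 0" and d: "d \<ge> 0" and a0: "d = 0 \<Longrightarrow> a = 0"
    and a: "m > 0 \<Longrightarrow> 0 \<le> a \<and> a < m" and L_eq: "L = int_lattice m d a"
    using subgroup_integer_group_DirProd_eq_int_lattice[OF L(1)] by blast
  have "m dvd int n"
    using L(2) int_lattice_column[of d a "int n" m] a0 L_eq by simp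
  moreover have "m > 0"
    using m n calculation by (cases "m = 0") auto
  ultimately show ?thesis
    using that d a0 a H_eq L_eq by blast
qed

section \<open>The Chabauty topology and the space N-bar x [k]\<close>

lemma topspace_chabauty_topology: "topspace (chabauty_topology G) = {H. subgroup H G}"
  by (auto simp: chabauty_topology_def topspace_pullback_topology)

lemma Hausdorff_space_pullback_topology:
  assumes T: "Hausdorff_space T" and f: "inj_on f A"
  shows "Hausdorff_space (pullback_topology A f T)"
  unfolding Hausdorff_space_def
proof (intro allI impI)
  fix x y
  assume "x \<in> topspace (pullback_topology A f T) \<and> y \<in> topspace (pullback_topology A f T) \<and> x \<noteq> y"
  then have "x \<in> A" "y \<in> A" "f x \<in> topspace T" "f y \<in> topspace T" "f x \<noteq> f y"
    using f by (auto simp: topspace_pullback_topology dest: inj_onD)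
  then obtain U V where "openin T U" "openin T V" "f x \<in> U" "f y \<in> V" "disjnt U V"
    using T unfolding Hausdorff_space_def by blast
  then have "openin (pullback_topology A f T) (f -` U \<inter> A)" "openin (pullback_topology A f T) (f -` V \<inter> A)"
    and "disjnt (f -` U \<inter> A) (f -` V \<inter> A)"
    by (auto simp: openin_pullback_topology disjnt_def)
  with \<open>x \<in> A\<close> \<open>y \<in> A\<close> \<open>f x \<in> U\<close> \<open>f y \<in> V\<close>
  show "\<exists>U V. openin (pullback_topology A f T) U \<and> openin (pullback_topology A f T) V
      \<and> x \<in> U \<and> y \<in> V \<and> disjnt U V"
    by blast
qed

lemma Hausdorff_space_chabauty_topology: "Hausdorff_space (chabauty_topology G)"
  unfolding chabauty_topology_def
proof (rule Hausdorff_space_pullback_topology)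
  show "inj_on (\<lambda>H. \<lambda>g\<in>carrier G. g \<in> H) {H. subgroup H G}"
  proof (rule inj_onI)
    fix H H' assume "H \<in> {H. subgroup H G}" "H' \<in> {H. subgroup H G}"
      and eq: "(\<lambda>g\<in>carrier G. g \<in> H) = (\<lambda>g\<in>carrier G. g \<in> H')"
    then have "H \<subseteq> carrier G" "H' \<subseteq> carrier G"
      by (auto dest: subgroup.subset)
    moreover have "g \<in> H \<longleftrightarrow> g \<in> H'" if "g \<in> carrier G" for g
      using fun_cong[OF eq, of g] that by simp
    ultimately show "H = H'"
      by blast
  qed
qed (simp add: Hausdorff_space_product_topology)

lemma continuous_map_chabauty_topology:
  assumes "\<And>x. x \<in> topspace T \<Longrightarrow> subgroup (f x) G"
    and "\<And>g. g \<in> carrier G \<Longrightarrow> continuous_map T (discrete_topology UNIV) (\<lambda>x. g \<in> f x)"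
  shows "continuous_map T (chabauty_topology G) f"
  unfolding chabauty_topology_def
proof (rule continuous_map_pullback')
  show "topspace T \<subseteq> f -` {H. subgroup H G}"
    using assms(1) by auto
  show "continuous_map T (product_topology (\<lambda>_. discrete_topology UNIV) (carrier G))
      ((\<lambda>H. \<lambda>g\<in>carrier G. g \<in> H) \<circ> f)"
    unfolding continuous_map_componentwise using assms(2) by (auto simp: o_def)
qed

lemma not_open_enat_infinity: "\<not> open {\<infinity> :: enat}"
proof
  assume "open {\<infinity> :: enat}"
  then obtain n where "{enat n <..} \<subseteq> {\<infinity>}"
    by (auto simp: open_enat_iff)
  moreover have "enat (Suc n) \<in> {enat n <..}"
    by simp
  ultimately show False
    by blast
qed

lemma continuous_map_enat_times_discrete:
  assumes "\<And>j. j \<in> J \<Longrightarrow> \<exists>N. \<forall>k\<ge>N. h (enat k, j) = h (\<infinity>, j)"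
  shows "continuous_map (prod_topology euclidean (discrete_topology J)) (discrete_topology UNIV) h"
proof -
  have "openin (prod_topology euclidean (discrete_topology J)) {p \<in> UNIV \<times> J. h p \<in> U}" for U
  proof -
    have "open {t. h (t, j) \<in> U}" if j: "j \<in> J" for j
      unfolding open_enat_iff
    proof
      assume "\<infinity> \<in> {t. h (t, j) \<in> U}"
      moreover obtain N where "\<forall>k\<ge>N. h (enat k, j) = h (\<infinity>, j)"
        using assms[OF j] by blast
      ultimately have "{enat N <..} \<subseteq> {t. h (t, j) \<in> U}"
      proof (intro subsetI CollectI)
        fix t assume "t \<in> {enat N <..}"
        with \<open>\<infinity> \<in> {t. h (t, j) \<in> U}\<close> \<open>\<forall>k\<ge>N. h (enat k, j) = h (\<infinity>, j)\<close>
        show "h (t, j) \<in> U"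
          by (cases t) auto
      qed
      then show "\<exists>N. {enat N <..} \<subseteq> {t. h (t, j) \<in> U}" ..
    qed
    then have "openin (prod_topology euclidean (discrete_topology J)) ({t. h (t, j) \<in> U} \<times> {j})"
      if "j \<in> J" for j
      using that by (simp add: openin_prod_Times_iff)
    moreover have "{p \<in> UNIV \<times> J. h p \<in> U} = (\<Union>j\<in>J. {t. h (t, j) \<in> U} \<times> {j})"
      by auto
    ultimately show ?thesis
      by (auto intro: openin_Union)
  qed
  then show ?thesis
    by (simp add: continuous_map_def)
qed

lemma derived_set_of_enat_times_discrete:
  "prod_topology (euclidean :: enat topology) (discrete_topology J) derived_set_of
     topspace (prod_topology euclidean (discrete_topology J)) = {\<infinity>} \<times> J"
proof -
  have "openin (prod_topology euclidean (discrete_topology J)) {(t, j)} \<longleftrightarrow> t \<noteq> \<infinity>"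
    if "j \<in> J" for t :: enat and j
  proof -
    have "openin (prod_topology euclidean (discrete_topology J)) ({t} \<times> {j}) \<longleftrightarrow> open {t}"
      using that openin_prod_Times_iff[of euclidean "discrete_topology J" "{t}" "{j}"]
      by (simp add: open_openin[symmetric])
    also have "\<dots> \<longleftrightarrow> t \<noteq> \<infinity>"
      using open_enat not_open_enat_infinity by (cases t) auto
    finally show ?thesis
      by simp
  qed
  then show ?thesis
    unfolding derived_set_of_topspace by auto
qed

lemma homeomorphic_space_discrete_topology:
  assumes "bij_betw f A B"
  shows "discrete_topology A homeomorphic_space discrete_topology B"
proof -
  have "homeomorphic_map (discrete_topology A) (discrete_topology B) f"
    using assms by (intro bijective_open_imp_homeomorphic_map)
      (auto simp: open_map_into_discrete_topology bij_betw_def)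
  then show ?thesis
    by (rule homeomorphic_map_imp_homeomorphic_space)
qed

section \<open>Parametrising the subgroups of Z x Z/nZ\<close>

(* k \<mapsto> (k div m + 1, k mod m) enumerates the parameters (d, a) with d > 0 and 0 \<le> a < m;
   its limit \<infinity> gets d = 0. *)
definition lattice_param :: "nat \<Rightarrow> enat \<Rightarrow> (int \<times> int) set" where
  "lattice_param m t = (case t of
      \<infinity> \<Rightarrow> int_lattice (int m) 0 0
    | enat k \<Rightarrow> int_lattice (int m) (int (k div m) + 1) (int (k mod m)))"

lemma lattice_param_eq_int_lattice:
  obtains d a where "d \<ge> 0" "d = 0 \<Longrightarrow> a = 0" "lattice_param m t = int_lattice (int m) d a"
proof (cases t)
  case (enat k)
  show ?thesis
    by (rule that[of "int (k div m) + 1" "int (k mod m)"]) (simp_all add: lattice_param_def enat)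
next
  case infinity
  show ?thesis
    by (rule that[of 0 0]) (simp_all add: lattice_param_def infinity)
qed

lemma lattice_param_surj:
  assumes "m > 0" "d \<ge> 0" "d = 0 \<Longrightarrow> a = 0" "0 \<le> a" "a < int m"
  shows "\<exists>t. lattice_param m t = int_lattice (int m) d a"
proof (cases "d = 0")
  case True
  then show ?thesis
    using assms(3) by (intro exI[of _ \<infinity>]) (simp add: lattice_param_def)
next
  case False
  define k where "k = nat (d - 1) * m + nat a"
  have "k div m = nat (d - 1)" "k mod m = nat a"
    using assms by (simp_all add: k_def)
  then show ?thesis
    using assms False by (intro exI[of _ "enat k"]) (simp add: lattice_param_def)
qed

lemma lattice_param_inject:
  assumes "m > 0" "m' > 0" and eq: "lattice_param m t = lattice_param m' t'"
  shows "m = m' \<and> t = t'"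
proof (cases t; cases t')
  fix k k' assume t: "t = enat k" and t': "t' = enat k'"
  have "int m = int m' \<and> int (k div m) + 1 = int (k' div m') + 1
      \<and> int (k mod m) mod int m = int (k' mod m') mod int m"
    using eq t t' by (intro int_lattice_inject) (simp_all add: lattice_param_def)
  then have "m = m'" "k div m = k' div m" "k mod m = k' mod m"
    using assms(1) by (auto simp: zmod_int[symmetric])
  then show ?thesis
    using t t' by (metis div_mult_mod_eq)
next
  fix k assume "t = enat k" "t' = \<infinity>"
  then have "int m = int m' \<and> int (k div m) + 1 = 0 \<and> int (k mod m) mod int m = 0 mod int m"
    using eq by (intro int_lattice_inject) (simp_all add: lattice_param_def)
  then show ?thesis
    by simp
next
  fix k' assume "t = \<infinity>" "t' = enat k'"
  then have "int m = int m' \<and> 0 = int (k' div m') + 1 \<and> 0 mod int m = int (k' mod m') mod int m"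
    using eq by (intro int_lattice_inject) (simp_all add: lattice_param_def)
  then show ?thesis
    by simp
next
  assume "t = \<infinity>" "t' = \<infinity>"
  then have "int m = int m' \<and> (0::int) = 0 \<and> 0 mod int m = 0 mod int m"
    using eq by (intro int_lattice_inject) (simp_all add: lattice_param_def)
  then show ?thesis
    using \<open>t = \<infinity>\<close> \<open>t' = \<infinity>\<close> by simp
qed

lemma mem_lattice_param_tail:
  assumes "m > 0" "k \<ge> nat \<bar>x\<bar> * m"
  shows "(x, y) \<in> lattice_param m (enat k) \<longleftrightarrow> (x, y) \<in> lattice_param m \<infinity>"
proof -
  have "nat \<bar>x\<bar> \<le> k div m"
    using assms div_le_mono[OF assms(2), of m] by simp
  then have "\<bar>x\<bar> < int (k div m) + 1"
    by linarith
  then show ?thesis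
    by (simp add: lattice_param_def mem_int_lattice_near_axis)
qed

lemma subgroup_lattice_param: "subgroup (lattice_param m t) (integer_group \<times>\<times> integer_group)"
  by (metis lattice_param_eq_int_lattice subgroup_int_lattice)

lemma period_mem_lattice_param: "m dvd n \<Longrightarrow> (0, int n) \<in> lattice_param m t"
  by (rule lattice_param_eq_int_lattice[of m t]) (simp add: int_lattice_column)

definition chabauty_param :: "nat \<Rightarrow> enat \<times> nat \<Rightarrow> (int \<times> int) set" where
  "chabauty_param n = (\<lambda>(t, m). lattice_param m t \<inter> UNIV \<times> {0..<int n})"

lemma chabauty_param_apply [simp]:
  "chabauty_param n (t, m) = lattice_param m t \<inter> UNIV \<times> {0..<int n}"
  by (simp add: chabauty_param_def)

lemma subgroup_chabauty_param:
  "n \<ge> 1 \<Longrightarrow> m dvd n \<Longrightarrow> subgroup (chabauty_param n (t, m)) (Z_times_Zn n)"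
  by (simp add: subgroup_Z_times_Zn_strip subgroup_lattice_param period_mem_lattice_param)

lemma image_chabauty_param:
  assumes n: "n \<ge> 1"
  shows "chabauty_param n ` (UNIV \<times> {m. m dvd n}) = {H. subgroup H (Z_times_Zn n)}"
proof (intro equalityI subsetI)
  fix H assume "H \<in> {H. subgroup H (Z_times_Zn n)}"
  then obtain m d a where m: "m > 0" "m dvd int n" and da: "d \<ge> 0" "d = 0 \<Longrightarrow> a = 0" "0 \<le> a" "a < m"
    and H: "H = int_lattice m d a \<inter> UNIV \<times> {0..<int n}"
    using subgroup_Z_times_Zn_cases[OF n] by blast
  have "nat m dvd n" "int (nat m) = m"
    using m by (simp_all add: nat_dvd_iff)
  moreover obtain t where "lattice_param (nat m) t = int_lattice m d a"
    using lattice_param_surj[of "nat m" d a] m da by auto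
  ultimately have "H = chabauty_param n (t, nat m)" "(t, nat m) \<in> UNIV \<times> {m. m dvd n}"
    using H by simp_all
  then show "H \<in> chabauty_param n ` (UNIV \<times> {m. m dvd n})"
    by (rule image_eqI)
qed (auto intro: subgroup_chabauty_param[OF n])

lemma inj_on_chabauty_param:
  assumes n: "n \<ge> 1"
  shows "inj_on (chabauty_param n) (UNIV \<times> {m. m dvd n})"
proof (rule inj_onI)
  fix p q
  assume p: "p \<in> UNIV \<times> {m. m dvd n}" and q: "q \<in> UNIV \<times> {m. m dvd n}"
    and eq: "chabauty_param n p = chabauty_param n q"
  obtain t m t' m' where pq: "p = (t, m)" "q = (t', m')" and m: "m dvd n" "m' dvd n"
    using p q by (cases p, cases q) simp
  have "lattice_param m t \<inter> UNIV \<times> {0..<int n} = lattice_param m' t' \<inter> UNIV \<times> {0..<int n}"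
    using eq pq by simp
  with n have "lattice_param m t = lattice_param m' t'"
    by (intro pair_subgroup_strip_inject[OF subgroup_lattice_param period_mem_lattice_param[OF m(1)]
          subgroup_lattice_param period_mem_lattice_param[OF m(2)]]) simp_all
  moreover have "m > 0" "m' > 0"
    using n m dvd_pos_nat[of n] by auto
  ultimately show "p = q"
    using lattice_param_inject pq by blast
qed

lemma continuous_map_chabauty_param:
  assumes n: "n \<ge> 1"
  shows "continuous_map (prod_topology euclidean (discrete_topology {m. m dvd n}))
    (chabauty_topology (Z_times_Zn n)) (chabauty_param n)"
proof (rule continuous_map_chabauty_topology)
  fix g :: "int \<times> int"
  obtain x y where g: "g = (x, y)" by force
  show "continuous_map (prod_topology euclidean (discrete_topology {m. m dvd n})) (discrete_topology UNIV)
      (\<lambda>p. g \<in> chabauty_param n p)"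
  proof (rule continuous_map_enat_times_discrete)
    fix m assume "m \<in> {m. m dvd n}"
    then have "m > 0"
      using n dvd_pos_nat[of n m] by simp
    then show "\<exists>N. \<forall>k\<ge>N. (g \<in> chabauty_param n (enat k, m)) = (g \<in> chabauty_param n (\<infinity>, m))"
      using mem_lattice_param_tail by (intro exI[of _ "nat \<bar>x\<bar> * m"]) (auto simp: g)
  qed
qed (auto intro: subgroup_chabauty_param[OF n])

lemma homeomorphic_map_chabauty_param:
  assumes n: "n \<ge> 1"
  shows "homeomorphic_map (prod_topology euclidean (discrete_topology {m. m dvd n}))
    (chabauty_topology (Z_times_Zn n)) (chabauty_param n)"
proof (rule continuous_imp_homeomorphic_map)
  show "compact_space (prod_topology (euclidean :: enat topology) (discrete_topology {m. m dvd n}))"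
  proof -
    have "compact_space (euclidean :: enat topology)"
      using compact_UNIV by (simp add: compact_space_def)
    then show ?thesis
      using n by (simp add: compact_space_prod_topology compact_space_discrete_topology)
  qed
qed (simp_all add: continuous_map_chabauty_param[OF n] Hausdorff_space_chabauty_topology
    image_chabauty_param[OF n] inj_on_chabauty_param[OF n] topspace_chabauty_topology)

lemma generate_integer_mod_group_divisor:
  assumes n: "n \<ge> 1" and m: "m dvd n"
  shows "generate (integer_mod_group n) {int m mod int n} = {y. 0 \<le> y \<and> y < int n \<and> int m dvd y}"
proof -
  have "int m mod int n \<in> carrier (integer_mod_group n)"
    using n by (simp add: carrier_integer_mod_group)
  then have "generate (integer_mod_group n) {int m mod int n} = range (\<lambda>k. k * (int m mod int n) mod int n)"
    using group.generate_pow[OF group_integer_mod_group] by (auto simp: int_pow_integer_mod_group)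
  also have "\<dots> = range (\<lambda>k. k * int m mod int n)"
    by (simp add: mod_mult_right_eq)
  also have "\<dots> = {y. 0 \<le> y \<and> y < int n \<and> int m dvd y}"
  proof (intro equalityI subsetI)
    fix y assume "y \<in> range (\<lambda>k. k * int m mod int n)"
    then show "y \<in> {y. 0 \<le> y \<and> y < int n \<and> int m dvd y}"
      using n m by (auto simp: dvd_mod_iff)
  next
    fix y assume "y \<in> {y. 0 \<le> y \<and> y < int n \<and> int m dvd y}"
    then obtain q where "y = q * int m"
      by (metis dvd_def mem_Collect_eq mult.commute)
    with \<open>y \<in> {y. 0 \<le> y \<and> y < int n \<and> int m dvd y}\<close> show "y \<in> range (\<lambda>k. k * int m mod int n)"
      by (intro image_eqI[where x = q]) simp_all
  qed
  finally show ?thesis .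
qed

lemma image_chabauty_param_infinity:
  assumes n: "n \<ge> 1"
  shows "chabauty_param n ` ({\<infinity>} \<times> {m. m dvd n})
    = {{0::int} \<times> generate (integer_mod_group n) {int m mod int n} | m. m > 0 \<and> m dvd n}"
proof -
  have infinity_times: "{\<infinity>} \<times> {m. m dvd n} = Pair \<infinity> ` {m. m dvd n}"
    by blast
  have "chabauty_param n ` ({\<infinity>} \<times> {m. m dvd n})
      = (\<lambda>m. lattice_param m \<infinity> \<inter> UNIV \<times> {0..<int n}) ` {m. m dvd n}"
    unfolding infinity_times image_image by simp
  also have "\<dots> = (\<lambda>m. {0} \<times> generate (integer_mod_group n) {int m mod int n}) ` {m. m dvd n}"
    using n by (intro image_cong)
      (auto simp: generate_integer_mod_group_divisor lattice_param_def mem_int_lattice_0_iff)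
  also have "\<dots> = {{0::int} \<times> generate (integer_mod_group n) {int m mod int n} | m. m > 0 \<and> m dvd n}"
    unfolding setcompr_eq_image using n dvd_pos_nat[of n] by (intro image_cong) auto
  finally show ?thesis .
qed

theorem corollary1:
  fixes n :: nat
  assumes "n \<ge> 1"
  shows "chabauty_topology (Z_times_Zn n) homeomorphic_space
           prod_topology (euclidean :: enat topology) (discrete_topology {1..num_divisors n})
       \<and> chabauty_topology (Z_times_Zn n) derived_set_of topspace (chabauty_topology (Z_times_Zn n))
           = {{0::int} \<times> generate (integer_mod_group n) {int m mod int n} | m. m > 0 \<and> m dvd n}"
proof -
  let ?C = "chabauty_topology (Z_times_Zn n)"
  let ?X = "\<lambda>J. prod_topology (euclidean :: enat topology) (discrete_topology J)"
  have hom: "homeomorphic_map (?X {m. m dvd n}) ?C (chabauty_param n)"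
    using homeomorphic_map_chabauty_param[OF assms] .
  obtain \<sigma> where "bij_betw \<sigma> {1..num_divisors n} {m. m dvd n}"
    using ex_bij_betw_nat_finite_1[of "{m. m dvd n}"] assms by (auto simp: num_divisors_def)
  then have "?X {1..num_divisors n} homeomorphic_space ?X {m. m dvd n}"
    by (intro homeomorphic_space_prod_topology homeomorphic_space_refl homeomorphic_space_discrete_topology)
  also have "?X {m. m dvd n} homeomorphic_space ?C"
    using hom by (rule homeomorphic_map_imp_homeomorphic_space)
  finally have "?C homeomorphic_space ?X {1..num_divisors n}"
    using homeomorphic_space_sym by blast
  moreover have "?C derived_set_of topspace ?C
      = chabauty_param n ` (?X {m. m dvd n} derived_set_of topspace (?X {m. m dvd n}))"
    using homeomorphic_map_derived_set_of[OF hom subset_refl]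
    unfolding homeomorphic_imp_surjective_map[OF hom] .
  ultimately show ?thesis
    by (simp only: derived_set_of_enat_times_discrete image_chabauty_param_infinity[OF assms])
qed

end
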